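(* Let $K$ be a field, $S=K[x_1,\dots,x_n]$, $A\subseteq\{1,\dots,n\}$ and $f=\prod_{j\in A}x_j$. For $L\subseteq A$ let $f_L=\prod_{l\in L}x_l$ and $Z_L=\{x_l^{-1}: l\in L\}\cup\{x_l: l\notin L\}$. Then $$S_f=\bigoplus_{L\subseteq A}f_L^{-1}K[Z_L]$$ is a Stanley decomposition of $S_f$.
   Context: $S_f=K[x_1,\dots,x_n,x_j^{-1}:j\in A]$, with $K$-basis the monomials $x_1^{a_1}\cdots x_n^{a_n}$, $a_j\in\mathbb Z$ for $j\in A$, $a_j\in\mathbb N$ for $j\notin A$. For a monomial $u\in S_f$ and $Z\subseteq\{x_1,\dots,x_n\}\cup\{x_j^{-1}:j\in A\}$ with $\{x_j,x_j^{-1}\}\not\subseteq Z$ for all $j\in A$, $uK[Z]$ is the $K$-span of all $uw$, $w$ a monomial in the elements of $Z$; it is a Stanley space if it is a free $K[Z]$-submodule. A Stanley decomposition of $S_f$ is an expression of $S_f$ as a finite direct sum (of $K$-vector spaces) of Stanley spaces. *)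

theory Defs
  imports Main "HOL-Library.Poly_Mapping"
begin

text \<open>Laurent monomials in x_1..x_n are exponent vectors (nat =>0 int);
  Laurent polynomials over K are finitely supported maps from exponent vectors to K,
  with the convolution product of Poly_Mapping (so monomial a * monomial b = monomial (a+b)).\<close>

type_synonym expo = "nat \<Rightarrow>\<^sub>0 int"
type_synonym 'k lpoly = "expo \<Rightarrow>\<^sub>0 'k"

definition mono :: "expo \<Rightarrow> 'k::field lpoly" where
  "mono e = Poly_Mapping.single e 1"

definition var_exp :: "nat \<Rightarrow> expo" where
  "var_exp j = Poly_Mapping.single j 1"

text \<open>Exponents of the monomial K-basis of S_f, f = prod_{j in A} x_j.\<close>
definition Sf_exps :: "nat \<Rightarrow> nat set \<Rightarrow> expo set" where
  "Sf_exps n A = {a. Poly_Mapping.keys a \<subseteq> {1..n} \<and> (\<forall>j\<in>{1..n} - A. 0 \<le> Poly_Mapping.lookup a j)}"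

definition Sf :: "nat \<Rightarrow> nat set \<Rightarrow> 'k::field lpoly set" where
  "Sf n A = {p. Poly_Mapping.keys p \<subseteq> Sf_exps n A}"

definition admissible_Z :: "nat \<Rightarrow> nat set \<Rightarrow> expo set \<Rightarrow> bool" where
  "admissible_Z n A Z \<longleftrightarrow>
     Z \<subseteq> {var_exp j | j. j \<in> {1..n}} \<union> {- var_exp j | j. j \<in> A} \<and>
     (\<forall>j\<in>A. \<not> (var_exp j \<in> Z \<and> - var_exp j \<in> Z))"

inductive_set Z_monos :: "expo set \<Rightarrow> expo set" for Z where
  zero: "0 \<in> Z_monos Z"
| step: "e \<in> Z_monos Z \<Longrightarrow> z \<in> Z \<Longrightarrow> e + z \<in> Z_monos Z"

definition KZ :: "expo set \<Rightarrow> 'k::field lpoly set" where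
  "KZ Z = {p. Poly_Mapping.keys p \<subseteq> Z_monos Z}"

definition uKZ :: "expo \<Rightarrow> expo set \<Rightarrow> 'k::field lpoly set" where
  "uKZ u Z = {mono u * p | p. p \<in> KZ Z}"

definition free_submodule :: "'k::field lpoly set \<Rightarrow> 'k lpoly set \<Rightarrow> bool" where
  "free_submodule R M \<longleftrightarrow>
     (\<exists>B \<subseteq> M.
        M = {\<Sum>b\<in>F. c b * b | F c. finite F \<and> F \<subseteq> B \<and> (\<forall>b\<in>F. c b \<in> R)} \<and>
        (\<forall>F c. finite F \<and> F \<subseteq> B \<and> (\<forall>b\<in>F. c b \<in> R) \<and> (\<Sum>b\<in>F. c b * b) = 0
               \<longrightarrow> (\<forall>b\<in>F. c b = 0)))"

definition stanley_space :: "nat \<Rightarrow> nat set \<Rightarrow> expo \<Rightarrow> expo set \<Rightarrow> 'k::field itself \<Rightarrow> bool" where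
  "stanley_space n A u Z _ \<longleftrightarrow>
     u \<in> Sf_exps n A \<and> admissible_Z n A Z \<and>
     free_submodule (KZ Z :: 'k lpoly set) (uKZ u Z)"

definition direct_sum_of :: "'k::field lpoly set \<Rightarrow> 'i set \<Rightarrow> ('i \<Rightarrow> 'k lpoly set) \<Rightarrow> bool" where
  "direct_sum_of W I V \<longleftrightarrow> finite I \<and> (\<forall>i\<in>I. V i \<subseteq> W) \<and>
     (\<forall>p\<in>W. \<exists>!v. (\<forall>i\<in>I. v i \<in> V i) \<and> (\<forall>i. i \<notin> I \<longrightarrow> v i = 0) \<and> p = (\<Sum>i\<in>I. v i))"

definition stanley_decomposition ::
    "nat \<Rightarrow> nat set \<Rightarrow> 'i set \<Rightarrow> ('i \<Rightarrow> expo) \<Rightarrow> ('i \<Rightarrow> expo set) \<Rightarrow> 'k::field itself \<Rightarrow> bool" where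
  "stanley_decomposition n A I u Z K \<longleftrightarrow>
     direct_sum_of (Sf n A :: 'k lpoly set) I (\<lambda>i. uKZ (u i) (Z i)) \<and>
     (\<forall>i\<in>I. stanley_space n A (u i) (Z i) K)"

definition fL_inv_exp :: "nat set \<Rightarrow> expo" where
  "fL_inv_exp L = - (\<Sum>l\<in>L. var_exp l)"

definition Z_L :: "nat \<Rightarrow> nat set \<Rightarrow> expo set" where
  "Z_L n L = {- var_exp l | l. l \<in> L} \<union> {var_exp l | l. l \<in> {1..n} - L}"

end

theory Submission imports Defs begin

text \<open>Every Laurent monomial of \<open>S\<^sub>f\<close> lies in exactly one orthant, determined by the set
  \<open>L \<subseteq> A\<close> of variables occurring with a negative exponent; the monomials of that orthant
  are exactly \<open>f\<^sub>L\<^sup>-\<^sup>1\<close> times the monomials in \<open>Z\<^sub>L\<close>. Since polynomials are supported on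
  monomials, \<open>S\<^sub>f\<close> is the direct sum of the spans of the orthants. Each summand is free
  over \<open>K[Z\<^sub>L]\<close> on the single generator \<open>f\<^sub>L\<^sup>-\<^sup>1\<close>, because monomials are units.\<close>

definition restrict_keys :: "('a \<Rightarrow>\<^sub>0 'b::zero) \<Rightarrow> 'a set \<Rightarrow> 'a \<Rightarrow>\<^sub>0 'b" where
  "restrict_keys p E = Poly_Mapping.mapp (\<lambda>a c. if a \<in> E then c else 0) p"

lemma lookup_restrict_keys:
  "Poly_Mapping.lookup (restrict_keys p E) a = (if a \<in> E then Poly_Mapping.lookup p a else 0)"
  by (auto simp: restrict_keys_def lookup_mapp when_def in_keys_iff)

lemma keys_restrict_keys: "Poly_Mapping.keys (restrict_keys p E) \<subseteq> E"
  by (auto simp: in_keys_iff lookup_restrict_keys split: if_splits)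

lemma lookup_sum_disjoint_supports:
  assumes "finite I" and "i \<in> I" and "a \<in> C i"
    and disjoint: "\<And>i j. i \<in> I \<Longrightarrow> j \<in> I \<Longrightarrow> C i \<inter> C j \<noteq> {} \<Longrightarrow> i = j"
    and supp: "\<And>j. j \<in> I \<Longrightarrow> Poly_Mapping.keys (v j) \<subseteq> C j"
  shows "Poly_Mapping.lookup (sum v I) a = Poly_Mapping.lookup (v i) a"
proof -
  have "Poly_Mapping.lookup (v j) a = 0" if "j \<in> I - {i}" for j
  proof -
    have "a \<notin> Poly_Mapping.keys (v j)"
      using that disjoint[of i j] supp[of j] \<open>i \<in> I\<close> \<open>a \<in> C i\<close> by blast
    then show ?thesis by (simp add: in_keys_iff)
  qed
  then show ?thesis
    unfolding lookup_sum using assms(1,2) by (simp add: sum.remove)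
qed

lemma restrict_keys_sum_disjoint_supports:
  assumes "finite I" and "i \<in> I"
    and disjoint: "\<And>i j. i \<in> I \<Longrightarrow> j \<in> I \<Longrightarrow> C i \<inter> C j \<noteq> {} \<Longrightarrow> i = j"
    and supp: "\<And>j. j \<in> I \<Longrightarrow> Poly_Mapping.keys (v j) \<subseteq> C j"
  shows "restrict_keys (sum v I) (C i) = v i"
proof (rule poly_mapping_eqI)
  fix a
  show "Poly_Mapping.lookup (restrict_keys (sum v I) (C i)) a = Poly_Mapping.lookup (v i) a"
  proof (cases "a \<in> C i")
    case True
    then show ?thesis
      using lookup_sum_disjoint_supports[where C = C, OF assms(1,2) True disjoint supp]
      by (simp add: lookup_restrict_keys)
  next
    case False
    then have "a \<notin> Poly_Mapping.keys (v i)" using supp \<open>i \<in> I\<close> by blast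
    then show ?thesis using False by (simp add: lookup_restrict_keys in_keys_iff)
  qed
qed

lemma sum_restrict_keys_partition:
  assumes "finite I"
    and disjoint: "\<And>i j. i \<in> I \<Longrightarrow> j \<in> I \<Longrightarrow> C i \<inter> C j \<noteq> {} \<Longrightarrow> i = j"
    and "Poly_Mapping.keys p \<subseteq> (\<Union>i\<in>I. C i)"
  shows "(\<Sum>i\<in>I. restrict_keys p (C i)) = p"
proof (rule poly_mapping_eqI)
  fix a
  show "Poly_Mapping.lookup (\<Sum>i\<in>I. restrict_keys p (C i)) a = Poly_Mapping.lookup p a"
  proof (cases "a \<in> (\<Union>i\<in>I. C i)")
    case True
    then obtain i where i: "i \<in> I" "a \<in> C i" by blast
    show ?thesis
      using lookup_sum_disjoint_supports[where C = C, OF \<open>finite I\<close> i disjoint keys_restrict_keys]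
        i by (simp add: lookup_restrict_keys)
  next
    case False
    then have "Poly_Mapping.lookup p a = 0" using assms(3) by (auto simp: in_keys_iff)
    then show ?thesis using False by (simp add: lookup_sum lookup_restrict_keys)
  qed
qed

lemma direct_sum_of_supports_partition:
  assumes "finite I"
    and disjoint: "\<And>i j. i \<in> I \<Longrightarrow> j \<in> I \<Longrightarrow> C i \<inter> C j \<noteq> {} \<Longrightarrow> i = j"
    and cover: "S = (\<Union>i\<in>I. C i)"
  shows "direct_sum_of {p :: 'k::field lpoly. Poly_Mapping.keys p \<subseteq> S} I
           (\<lambda>i. {p. Poly_Mapping.keys p \<subseteq> C i})"
  unfolding direct_sum_of_def
proof (intro conjI ballI)
  fix p :: "'k lpoly"
  assume p: "p \<in> {p. Poly_Mapping.keys p \<subseteq> S}"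
  let ?decomp = "\<lambda>v. (\<forall>i\<in>I. v i \<in> {p. Poly_Mapping.keys p \<subseteq> C i}) \<and>
                     (\<forall>i. i \<notin> I \<longrightarrow> v i = 0) \<and> p = sum v I"
  define v where "v i = (if i \<in> I then restrict_keys p (C i) else 0)" for i
  have "sum v I = p"
    using sum_restrict_keys_partition[OF \<open>finite I\<close> disjoint] p cover by (simp add: v_def)
  then have "?decomp v" by (simp add: v_def keys_restrict_keys)
  moreover have "w = v" if w: "?decomp w" for w
  proof
    fix i
    have "restrict_keys p (C i) = w i" if "i \<in> I"
      using restrict_keys_sum_disjoint_supports[where C = C and v = w, OF \<open>finite I\<close> that disjoint] w
      by blast
    then show "w i = v i" using w by (simp add: v_def)
  qed
  ultimately show "\<exists>!v. ?decomp v" by blast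
qed (use assms in auto)

lemma direct_sum_of_cong:
  assumes "\<And>i. i \<in> I \<Longrightarrow> V i = V' i"
  shows "direct_sum_of W I V = direct_sum_of W I V'"
proof -
  have "(\<forall>i\<in>I. V i \<subseteq> W) \<longleftrightarrow> (\<forall>i\<in>I. V' i \<subseteq> W)"
    and "\<And>v. (\<forall>i\<in>I. v i \<in> V i) \<longleftrightarrow> (\<forall>i\<in>I. v i \<in> V' i)"
    using assms by auto
  then show ?thesis unfolding direct_sum_of_def by simp
qed

lemma mono_add: "mono (a + b) = (mono a * mono b :: 'k::field lpoly)"
  by (simp add: mono_def mult_single)

lemma mono_uminus_mult: "mono (- u) * mono u = (1 :: 'k::field lpoly)"
  by (simp add: mono_add[symmetric]) (simp add: mono_def)

lemma lookup_mono_mult: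
  "Poly_Mapping.lookup (mono u * (p :: 'k::field lpoly)) a = Poly_Mapping.lookup p (a - u)"
proof -
  have "Poly_Mapping.lookup (mono u * p) a =
     (\<Sum>l. (1 when u = l) * (\<Sum>q. Poly_Mapping.lookup p q when a = l + q))"
    unfolding mono_def lookup_mult lookup_single ..
  also have "\<dots> = (\<Sum>q. Poly_Mapping.lookup p q when a = u + q)"
    by (simp only: when_mult mult_1 Sum_any_when_equal')
  also have "\<dots> = (\<Sum>q. Poly_Mapping.lookup p q when q = a - u)"
    by (rule Sum_any.cong) (auto simp: when_def)
  finally show ?thesis by simp
qed

lemma keys_mono_mult:
  "Poly_Mapping.keys (mono u * (p :: 'k::field lpoly)) = (+) u ` Poly_Mapping.keys p"
proof -
  have "a \<in> (+) u ` Poly_Mapping.keys p \<longleftrightarrow> a - u \<in> Poly_Mapping.keys p" for a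
  proof
    assume "a - u \<in> Poly_Mapping.keys p"
    then have "u + (a - u) \<in> (+) u ` Poly_Mapping.keys p" by blast
    then show "a \<in> (+) u ` Poly_Mapping.keys p" by simp
  qed auto
  then show ?thesis by (auto simp: in_keys_iff lookup_mono_mult)
qed

lemma uKZ_eq_supported_on:
  "(uKZ u Z :: 'k::field lpoly set) = {p. Poly_Mapping.keys p \<subseteq> (+) u ` Z_monos Z}"
proof (intro set_eqI iffI)
  fix q :: "'k lpoly"
  assume "q \<in> {p. Poly_Mapping.keys p \<subseteq> (+) u ` Z_monos Z}"
  then have "Poly_Mapping.keys (mono (- u) * q) \<subseteq> Z_monos Z"
    by (auto simp: keys_mono_mult)
  moreover have "mono u * (mono (- u) * q) = q"
  proof -
    have "mono u * (mono (- u) * q) = (mono (- u) * mono u) * q"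
      by (simp only: mult.left_commute[of "mono u"] mult.assoc)
    then show ?thesis by (simp add: mono_uminus_mult)
  qed
  ultimately show "q \<in> uKZ u Z" unfolding uKZ_def KZ_def by force
qed (force simp: uKZ_def KZ_def keys_mono_mult)

lemma free_submodule_uKZ: "free_submodule (KZ Z) (uKZ u Z :: 'k::field lpoly set)"
  unfolding free_submodule_def
proof (intro exI[of _ "{mono u}"] conjI allI impI)
  show "{mono u} \<subseteq> (uKZ u Z :: 'k lpoly set)"
    unfolding uKZ_def KZ_def using Z_monos.zero by (auto intro!: exI[of _ 1])
  show "(uKZ u Z :: 'k lpoly set) =
    {\<Sum>b\<in>F. c b * b | F c. finite F \<and> F \<subseteq> {mono u} \<and> (\<forall>b\<in>F. c b \<in> KZ Z)}"
  proof (intro set_eqI iffI)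
    fix x :: "'k lpoly"
    assume "x \<in> uKZ u Z"
    then obtain p where "x = mono u * p" "p \<in> KZ Z" unfolding uKZ_def by blast
    then show "x \<in> {\<Sum>b\<in>F. c b * b | F c. finite F \<and> F \<subseteq> {mono u} \<and> (\<forall>b\<in>F. c b \<in> KZ Z)}"
      by (intro CollectI exI[of _ "{mono u}"] exI[of _ "\<lambda>_. p"]) (simp add: mult.commute)
  next
    fix x :: "'k lpoly"
    assume "x \<in> {\<Sum>b\<in>F. c b * b | F c. finite F \<and> F \<subseteq> {mono u} \<and> (\<forall>b\<in>F. c b \<in> KZ Z)}"
    then obtain F c where x: "x = (\<Sum>b\<in>F. c b * b)" and F: "F = {} \<or> F = {mono u}"
      and c: "\<forall>b\<in>F. c b \<in> KZ Z"
      by blast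
    from F show "x \<in> uKZ u Z"
    proof
      assume "F = {}"
      then show ?thesis using x unfolding uKZ_def KZ_def by (auto intro!: exI[of _ 0])
    next
      assume "F = {mono u}"
      then show ?thesis using x c unfolding uKZ_def by (auto simp: mult.commute)
    qed
  qed
next
  fix F c
  assume h: "finite F \<and> F \<subseteq> {mono u} \<and> (\<forall>b\<in>F. c b \<in> (KZ Z :: 'k lpoly set)) \<and>
    (\<Sum>b\<in>F. c b * b) = 0"
  show "\<forall>b\<in>F. c b = 0"
  proof
    fix b
    assume "b \<in> F"
    with h have "F = {mono u}" "b = mono u" by auto
    with h have "c b * mono u * mono (- u) = 0" by simp
    also have "c b * mono u * mono (- u) = c b * (mono (- u) * mono u)"
      by (simp only: mult.assoc mult.commute[of "mono u"])
    finally show "c b = 0" by (simp add: mono_uminus_mult)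
  qed
qed

lemma Z_monos_add:
  assumes "e \<in> Z_monos Z" and "f \<in> Z_monos Z"
  shows "e + f \<in> Z_monos Z"
  using assms(2)
proof (induction f rule: Z_monos.induct)
  case (step f z)
  then show ?case using Z_monos.step[of "e + f" Z z] by (simp add: add.assoc)
qed (use assms(1) in simp)

lemma Z_monos_sum: "finite I \<Longrightarrow> (\<And>i. i \<in> I \<Longrightarrow> g i \<in> Z_monos Z) \<Longrightarrow> sum g I \<in> Z_monos Z"
  by (induction I rule: finite_induct) (auto intro: Z_monos_add Z_monos.zero)

lemma Z_monos_single_multiple:
  assumes "Poly_Mapping.single j s \<in> Z"
  shows "Poly_Mapping.single j (int m * s) \<in> Z_monos Z"
proof (induction m)
  case 0
  then show ?case by (simp add: Z_monos.zero)
next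
  case (Suc m)
  have "Poly_Mapping.single j (int (Suc m) * s) =
      Poly_Mapping.single j (int m * s) + Poly_Mapping.single j s"
    by (simp add: single_add[symmetric] algebra_simps)
  then show ?case using Z_monos.step[OF Suc assms] by simp
qed

lemma lookup_var_exp: "Poly_Mapping.lookup (var_exp l) j = (if j = l then 1 else 0)"
  by (simp add: var_exp_def lookup_single when_def)

lemma lookup_fL_inv_exp:
  "finite L \<Longrightarrow> Poly_Mapping.lookup (fL_inv_exp L) j = (if j \<in> L then -1 else 0)"
  by (simp add: fL_inv_exp_def var_exp_def lookup_sum lookup_single when_def lookup_minus)

lemma var_exp_in_Z_L: "var_exp j \<in> Z_L n L \<longleftrightarrow> j \<in> {1..n} - L"
  and uminus_var_exp_in_Z_L: "- var_exp j \<in> Z_L n L \<longleftrightarrow> j \<in> L"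
proof -
  have "- var_exp l \<noteq> var_exp j" for l
  proof
    assume "- var_exp l = var_exp j"
    then have "Poly_Mapping.lookup (- var_exp l) j = Poly_Mapping.lookup (var_exp j) j" by simp
    then show False by (simp add: lookup_var_exp lookup_minus split: if_splits)
  qed
  moreover have "var_exp j = var_exp l \<longleftrightarrow> j = l" for l
  proof
    assume "var_exp j = var_exp l"
    then have "Poly_Mapping.lookup (var_exp j) j = Poly_Mapping.lookup (var_exp l) j" by simp
    then show "j = l" by (simp add: lookup_var_exp split: if_splits)
  qed simp
  ultimately show "var_exp j \<in> Z_L n L \<longleftrightarrow> j \<in> {1..n} - L"
    and "- var_exp j \<in> Z_L n L \<longleftrightarrow> j \<in> L"
    unfolding Z_L_def by (auto simp: minus_equation_iff[of "var_exp j"] dest: sym)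
qed

lemma Z_monos_Z_L:
  assumes "L \<subseteq> {1..n}"
  shows "Z_monos (Z_L n L) = {e. Poly_Mapping.keys e \<subseteq> {1..n} \<and>
    (\<forall>j\<in>L. Poly_Mapping.lookup e j \<le> 0) \<and> (\<forall>j\<in>{1..n} - L. 0 \<le> Poly_Mapping.lookup e j)}"
    (is "_ = ?cone")
proof (intro set_eqI iffI)
  fix e
  assume "e \<in> Z_monos (Z_L n L)"
  then show "e \<in> ?cone"
  proof (induction e rule: Z_monos.induct)
    case (step e z)
    from step.hyps(2) obtain l where
      z: "z = - var_exp l \<and> l \<in> L \<or> z = var_exp l \<and> l \<in> {1..n} - L"
      unfolding Z_L_def by blast
    then have "Poly_Mapping.keys z \<subseteq> {1..n}"
      using assms by (auto simp: var_exp_def single_uminus[symmetric])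
    then have "Poly_Mapping.keys (e + z) \<subseteq> {1..n}"
      using step.IH keys_add[of e z] by blast
    with z show ?case
      using step.IH by (fastforce simp: lookup_add lookup_minus lookup_var_exp)
  qed simp
next
  fix e
  assume e: "e \<in> ?cone"
  have "Poly_Mapping.single j (Poly_Mapping.lookup e j) \<in> Z_monos (Z_L n L)"
    if "j \<in> {1..n}" for j
  proof (cases "j \<in> L")
    case True
    have "Poly_Mapping.single j (-1) \<in> Z_L n L"
      using True uminus_var_exp_in_Z_L[of j n L] by (simp add: var_exp_def single_uminus)
    from Z_monos_single_multiple[OF this, of "nat (- Poly_Mapping.lookup e j)"]
    show ?thesis using True e by simp
  next
    case False
    have "Poly_Mapping.single j 1 \<in> Z_L n L"
      using False that var_exp_in_Z_L[of j n L] by (simp add: var_exp_def)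
    from Z_monos_single_multiple[OF this, of "nat (Poly_Mapping.lookup e j)"]
    show ?thesis using False that e by simp
  qed
  then have "(\<Sum>j\<in>{1..n}. Poly_Mapping.single j (Poly_Mapping.lookup e j)) \<in> Z_monos (Z_L n L)"
    by (intro Z_monos_sum) auto
  moreover have "(\<Sum>j\<in>{1..n}. Poly_Mapping.single j (Poly_Mapping.lookup e j)) = e"
    using e by (intro poly_mapping_eqI) (auto simp: lookup_sum lookup_single when_def in_keys_iff)
  ultimately show "e \<in> Z_monos (Z_L n L)" by simp
qed

definition negative_support_exps :: "nat \<Rightarrow> nat set \<Rightarrow> expo set" where
  "negative_support_exps n L =
     {a. Poly_Mapping.keys a \<subseteq> {1..n} \<and> {j. Poly_Mapping.lookup a j < 0} = L}"

lemma Sf_exps_eq_Union_negative_support_exps: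
  "Sf_exps n A = (\<Union>L\<in>Pow A. negative_support_exps n L)"
proof (intro set_eqI iffI)
  fix a
  assume a: "a \<in> Sf_exps n A"
  have "{j. Poly_Mapping.lookup a j < 0} \<subseteq> A"
  proof
    fix j
    assume "j \<in> {j. Poly_Mapping.lookup a j < 0}"
    then have "j \<in> Poly_Mapping.keys a" "\<not> 0 \<le> Poly_Mapping.lookup a j"
      by (auto simp: in_keys_iff)
    then show "j \<in> A" using a by (auto simp: Sf_exps_def)
  qed
  then show "a \<in> (\<Union>L\<in>Pow A. negative_support_exps n L)"
    using a by (auto simp: Sf_exps_def negative_support_exps_def)
next
  fix a
  assume "a \<in> (\<Union>L\<in>Pow A. negative_support_exps n L)"
  then obtain L where "L \<subseteq> A" "Poly_Mapping.keys a \<subseteq> {1..n}"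
    "{j. Poly_Mapping.lookup a j < 0} = L"
    by (auto simp: negative_support_exps_def)
  then show "a \<in> Sf_exps n A"
    unfolding Sf_exps_def by (auto simp: not_less[symmetric])
qed

lemma image_shift_Z_monos_Z_L:
  assumes L: "L \<subseteq> {1..n}"
  shows "(+) (fL_inv_exp L) ` Z_monos (Z_L n L) = negative_support_exps n L"
proof -
  let ?u = "fL_inv_exp L"
  have lookup_u: "Poly_Mapping.lookup ?u j = (if j \<in> L then -1 else 0)" for j
    using L by (intro lookup_fL_inv_exp) (rule finite_subset, auto)
  have keys_u: "Poly_Mapping.keys ?u \<subseteq> {1..n}"
    using L by (auto simp: in_keys_iff lookup_u split: if_splits)
  have shift: "a \<in> negative_support_exps n L \<longleftrightarrow> a - ?u \<in> Z_monos (Z_L n L)" for a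
  proof -
    have "Poly_Mapping.keys (a - ?u) \<subseteq> Poly_Mapping.keys a \<union> Poly_Mapping.keys ?u"
      using keys_add[of a "- ?u"] by simp
    moreover have "Poly_Mapping.keys a \<subseteq> Poly_Mapping.keys (a - ?u) \<union> Poly_Mapping.keys ?u"
      using keys_add[of "a - ?u" ?u] by simp
    ultimately have "Poly_Mapping.keys a \<subseteq> {1..n} \<longleftrightarrow> Poly_Mapping.keys (a - ?u) \<subseteq> {1..n}"
      using keys_u by blast
    moreover have "{j. Poly_Mapping.lookup a j < 0} = L \<longleftrightarrow>
        (\<forall>j\<in>L. Poly_Mapping.lookup (a - ?u) j \<le> 0) \<and>
        (\<forall>j\<in>{1..n} - L. 0 \<le> Poly_Mapping.lookup (a - ?u) j)"
      if "Poly_Mapping.keys a \<subseteq> {1..n}"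
    proof -
      have outside: "Poly_Mapping.lookup a j = 0" if "j \<notin> {1..n}" for j
        using that \<open>Poly_Mapping.keys a \<subseteq> {1..n}\<close> by (auto simp: in_keys_iff)
      have "{j. Poly_Mapping.lookup a j < 0} = L \<longleftrightarrow>
          (\<forall>j\<in>L. Poly_Mapping.lookup a j < 0) \<and> (\<forall>j\<in>{1..n} - L. 0 \<le> Poly_Mapping.lookup a j)"
      proof
        assume signs: "(\<forall>j\<in>L. Poly_Mapping.lookup a j < 0) \<and>
          (\<forall>j\<in>{1..n} - L. 0 \<le> Poly_Mapping.lookup a j)"
        show "{j. Poly_Mapping.lookup a j < 0} = L"
        proof (intro set_eqI iffI)
          fix j
          assume neg: "j \<in> {j. Poly_Mapping.lookup a j < 0}"
          then have "j \<in> {1..n}" using outside by force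
          then show "j \<in> L" using signs neg by force
        qed (use signs in auto)
      qed auto
      then show ?thesis by (simp add: lookup_minus lookup_u add1_zle_eq)
    qed
    ultimately show ?thesis
      unfolding Z_monos_Z_L[OF L] negative_support_exps_def by blast
  qed
  show ?thesis
  proof (intro set_eqI iffI)
    fix a
    assume "a \<in> negative_support_exps n L"
    then have "?u + (a - ?u) \<in> (+) ?u ` Z_monos (Z_L n L)" using shift by blast
    then show "a \<in> (+) ?u ` Z_monos (Z_L n L)" by simp
  next
    fix a
    assume "a \<in> (+) ?u ` Z_monos (Z_L n L)"
    then obtain e where "e \<in> Z_monos (Z_L n L)" "a = ?u + e" by blast
    then show "a \<in> negative_support_exps n L" using shift[of a] by simp
  qed
qed

lemma admissible_Z_L: "L \<subseteq> A \<Longrightarrow> admissible_Z n A (Z_L n L)"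
  unfolding admissible_Z_def
  using var_exp_in_Z_L uminus_var_exp_in_Z_L by (auto simp: Z_L_def)

theorem proposition2p1:
  fixes n :: nat and A :: "nat set"
  assumes "A \<subseteq> {1..n}"
  shows "stanley_decomposition n A (Pow A) fL_inv_exp (Z_L n) TYPE('k::field)"
proof -
  have summand: "(uKZ (fL_inv_exp L) (Z_L n L) :: 'k lpoly set) =
      {p. Poly_Mapping.keys p \<subseteq> negative_support_exps n L}" if "L \<in> Pow A" for L
    using that assms by (simp add: uKZ_eq_supported_on image_shift_Z_monos_Z_L)
  have "direct_sum_of (Sf n A :: 'k lpoly set) (Pow A)
      (\<lambda>L. {p. Poly_Mapping.keys p \<subseteq> negative_support_exps n L})"
    unfolding Sf_def Sf_exps_eq_Union_negative_support_exps
  proof (rule direct_sum_of_supports_partition)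
    show "finite (Pow A)" using assms finite_subset by blast
  qed (auto simp: negative_support_exps_def)
  then have "direct_sum_of (Sf n A :: 'k lpoly set) (Pow A)
      (\<lambda>L. uKZ (fL_inv_exp L) (Z_L n L))"
    by (simp only: direct_sum_of_cong[OF summand])
  moreover have "fL_inv_exp L \<in> Sf_exps n A" if "L \<in> Pow A" for L
  proof -
    have "L \<subseteq> {1..n}" using that assms by blast
    then have "fL_inv_exp L + 0 \<in> negative_support_exps n L"
      using image_shift_Z_monos_Z_L[of L n] Z_monos.zero[of "Z_L n L"] by (metis imageI)
    then show ?thesis using that by (auto simp: Sf_exps_eq_Union_negative_support_exps)
  qed
  ultimately show ?thesis
    unfolding stanley_decomposition_def stanley_space_def
    using admissible_Z_L free_submodule_uKZ by auto
qed

end
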